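(* Let $d$ be odd and let $H$ be a dephased $d\times d$ complex Hadamard matrix. There is no nonzero real $d\times d$ matrix $R$ with zero first row and zero first column whose nonzero entries all lie in only two columns (or all lie in only two rows) such that $H\circ\exp(i\xi R)$ is a complex Hadamard matrix for every $\xi\in\mathbb{R}$. In other words, in an affine family of complex Hadamard matrices of odd order, no parameter can appear in only two columns or only two rows.
   Context: A $d\times d$ complex Hadamard matrix has unimodular entries and pairwise orthogonal columns; it is dephased if its first row and first column consist of $1$'s. $\circ$ denotes the entrywise product and $\exp(i\xi R)$ the entrywise exponential $(\exp(i\xi R))_{jk}=e^{i\xi R_{jk}}$. An affine family stemming from a dephased $H$ is a set $\{H\circ\exp(i\sum_k\xi_kR_k)\}$ with real matrices $R_k$ having zero first row and column. *)

theory Defs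
  imports "HOL-Analysis.Analysis"
begin

text \<open>d x d matrices are represented as functions nat => nat => _ with indices 0..d-1;
  index 0 is the first row / first column.\<close>

definition complex_hadamard :: "nat \<Rightarrow> (nat \<Rightarrow> nat \<Rightarrow> complex) \<Rightarrow> bool" where
  "complex_hadamard d H \<longleftrightarrow>
     (\<forall>j<d. \<forall>k<d. norm (H j k) = 1) \<and>
     (\<forall>k<d. \<forall>l<d. k \<noteq> l \<longrightarrow> (\<Sum>j<d. H j k * cnj (H j l)) = 0)"

definition dephased :: "nat \<Rightarrow> (nat \<Rightarrow> nat \<Rightarrow> complex) \<Rightarrow> bool" where
  "dephased d H \<longleftrightarrow> (\<forall>k<d. H 0 k = 1) \<and> (\<forall>j<d. H j 0 = 1)"

definition had_exp :: "(nat \<Rightarrow> nat \<Rightarrow> complex) \<Rightarrow> real \<Rightarrow> (nat \<Rightarrow> nat \<Rightarrow> real) \<Rightarrow> nat \<Rightarrow> nat \<Rightarrow> complex" where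
  "had_exp H \<xi> R = (\<lambda>j k. H j k * exp (\<i> * complex_of_real (\<xi> * R j k)))"

end

theory Submission
  imports Defs "Jordan_Normal_Form.Determinant"
begin

text \<open>Let the nonzero entries of R lie in columns c and c', and let u be column c of H with
  the entries in the rows where R j c \<noteq> 0 replaced by 0. Since the phases
  e^(i \<xi> R j c) are independent functions of \<xi>, orthogonality of columns c and k in every
  member of the family forces u to be orthogonal to every column k \<noteq> c, c' of H.
  Expanding u in the orthogonal basis of columns gives d u = s H_c + \<beta> H_c', where s is the
  number of rows with R j c = 0. Taking moduli in a row where R j c \<noteq> 0 gives s = |\<beta>|, and
  in the first row (where R 0 c = 0) gives d - s = |\<beta>|, so d = 2s is even. Hence an odd
  family cannot have a nonzero column c, and the statement for rows follows by
  transposition.\<close>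

lemma unimodular_mult_cnj:
  fixes z :: complex
  assumes "norm z = 1"
  shows "z * cnj z = 1"
  by (metis assms complex_norm_square of_real_1 power_one)

lemma complex_hadamard_unimodular:
  "complex_hadamard d H \<Longrightarrow> j < d \<Longrightarrow> k < d \<Longrightarrow> norm (H j k) = 1"
  by (simp add: complex_hadamard_def)

lemma complex_hadamard_columns_orthogonal:
  assumes "complex_hadamard d H" "k < d" "l < d"
  shows "(\<Sum>j<d. cnj (H j k) * H j l) = (if k = l then of_nat d else 0)"
proof (cases "k = l")
  case True
  then show ?thesis
    using assms complex_hadamard_unimodular[OF assms(1)]
    by (simp add: unimodular_mult_cnj mult.commute)
next
  case False
  then have "(\<Sum>j<d. H j l * cnj (H j k)) = 0"
    using assms by (simp add: complex_hadamard_def)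
  then show ?thesis using False by (simp add: mult.commute)
qed

text \<open>Rows inherit orthogonality from columns because a left inverse of a square matrix is also
  a right inverse.\<close>

lemma complex_hadamard_rows_orthogonal:
  assumes "complex_hadamard d H" "j < d" "l < d"
  shows "(\<Sum>k<d. H j k * cnj (H l k)) = (if j = l then of_nat d else 0)"
proof -
  have d0: "d > 0" using assms by auto
  define A where "A = Matrix.mat d d (\<lambda>(i, k). cnj (H k i) / of_nat d)"
  define B where "B = Matrix.mat d d (\<lambda>(i, k). H i k)"
  have "A * B = 1\<^sub>m d"
  proof (rule eq_matI)
    fix i k assume ik: "i < dim_row (1\<^sub>m d)" "k < dim_col (1\<^sub>m d)"
    then have "(A * B) $$ (i, k) = (\<Sum>j<d. cnj (H j i) * H j k) / of_nat d"
      by (simp add: A_def B_def scalar_prod_def sum_divide_distrib atLeast0LessThan)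
    then show "(A * B) $$ (i, k) = 1\<^sub>m d $$ (i, k)"
      using ik d0 complex_hadamard_columns_orthogonal[OF assms(1), of i k] by auto
  qed (auto simp: A_def B_def)
  then have "B * A = 1\<^sub>m d"
    using mat_mult_left_right_inverse[of A d B] by (auto simp: A_def B_def)
  then have "(B * A) $$ (j, l) = 1\<^sub>m d $$ (j, l)" by simp
  then have "(\<Sum>k<d. H j k * cnj (H l k)) / of_nat d = (if j = l then 1 else 0)"
    using assms by (simp add: A_def B_def scalar_prod_def sum_divide_distrib atLeast0LessThan)
  then show ?thesis using d0 by (auto split: if_splits simp: field_simps)
qed

lemma complex_hadamard_transpose:
  assumes "complex_hadamard d H"
  shows "complex_hadamard d (\<lambda>j k. H k j)"
  using assms complex_hadamard_rows_orthogonal[OF assms]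
  by (auto simp: complex_hadamard_def)

lemma had_exp_transpose:
  "had_exp (\<lambda>j k. H k j) \<xi> (\<lambda>j k. R k j) = (\<lambda>j k. had_exp H \<xi> R k j)"
  by (simp add: had_exp_def)

lemma complex_hadamard_expansion:
  assumes "complex_hadamard d H" "j < d"
  shows "(\<Sum>k<d. H j k * (\<Sum>l<d. u l * cnj (H l k))) = of_nat d * u j"
proof -
  have "(\<Sum>k<d. H j k * (\<Sum>l<d. u l * cnj (H l k))) = (\<Sum>l<d. u l * (\<Sum>k<d. H j k * cnj (H l k)))"
    unfolding sum_distrib_left by (subst sum.swap) (simp add: algebra_simps)
  also have "\<dots> = (\<Sum>l<d. if l = j then u l * of_nat d else 0)"
    by (rule sum.cong) (auto simp: complex_hadamard_rows_orthogonal[OF assms])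
  finally show ?thesis using assms(2) by (simp add: mult.commute)
qed

text \<open>Subtracting e^(i t r0) times the identity from its shift by t kills the frequency r0 and
  multiplies the frequency r by e^(i t r) - e^(i t r0), which is nonzero for t = \<pi>/(r - r0);
  induct on the number of frequencies.\<close>

lemma exp_sum_eq_0_imp_frequency_sum_eq_0:
  fixes z :: "'i \<Rightarrow> complex" and a :: "'i \<Rightarrow> real"
  assumes "finite J" "\<forall>\<xi>::real. (\<Sum>j\<in>J. z j * exp (\<i> * complex_of_real (\<xi> * a j))) = 0"
  shows "(\<Sum>j\<in>{j\<in>J. a j = r}. z j) = 0"
  using assms
proof (induction "card (a ` J)" arbitrary: J z rule: less_induct)
  case less
  show ?case
  proof (cases "\<forall>j\<in>J. a j = r")
    case True
    then have "{j\<in>J. a j = r} = J" by auto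
    with less.prems(2)[rule_format, of 0] show ?thesis by simp
  next
    case False
    then obtain j0 where j0: "j0 \<in> J" "a j0 \<noteq> r" by auto
    define r0 where "r0 = a j0"
    define t where "t = pi / (r - r0)"
    define e where "e x = exp (\<i> * complex_of_real x)" for x
    define J' where "J' = {j\<in>J. a j \<noteq> r0}"
    define z' where "z' j = z j * (e (t * a j) - e (t * r0))" for j
    have "a ` J' \<subset> a ` J" using j0 by (force simp: J'_def r0_def)
    then have card: "card (a ` J') < card (a ` J)"
      using less.prems(1) by (simp add: psubset_card_mono)
    have shifted: "(\<Sum>j\<in>J'. z' j * e (\<xi> * a j)) = 0" for \<xi>
    proof -
      have "(\<Sum>j\<in>J'. z' j * e (\<xi> * a j)) = (\<Sum>j\<in>J. z' j * e (\<xi> * a j))"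
        by (rule sum.mono_neutral_left) (auto simp: J'_def z'_def less.prems)
      also have "\<dots> = (\<Sum>j\<in>J. z j * e ((t + \<xi>) * a j)) - e (t * r0) * (\<Sum>j\<in>J. z j * e (\<xi> * a j))"
        unfolding sum_distrib_left sum_subtractf[symmetric]
        by (rule sum.cong) (auto simp: z'_def e_def algebra_simps exp_add[symmetric])
      also have "\<dots> = 0"
        using less.prems(2)[rule_format, of "t + \<xi>"] less.prems(2)[rule_format, of \<xi>]
        by (simp only: e_def) simp
      finally show ?thesis .
    qed
    have "t * r = t * r0 + pi" using j0 by (simp add: t_def r0_def field_simps)
    then have antipodal: "e (t * r) = - e (t * r0)" by (simp add: e_def distrib_left exp_add)
    have "(\<Sum>j\<in>{j\<in>J'. a j = r}. z' j) = 0"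
      using less.hyps[OF card] less.prems(1) shifted by (simp add: J'_def e_def)
    moreover have "{j\<in>J'. a j = r} = {j\<in>J. a j = r}" using j0 by (auto simp: J'_def r0_def)
    moreover have "(\<Sum>j\<in>{j\<in>J. a j = r}. z' j) = - 2 * e (t * r0) * (\<Sum>j\<in>{j\<in>J. a j = r}. z j)"
      unfolding sum_distrib_left by (rule sum.cong) (auto simp: z'_def antipodal)
    ultimately show ?thesis by (simp add: e_def)
  qed
qed

context
  fixes d :: nat and H :: "nat \<Rightarrow> nat \<Rightarrow> complex" and R :: "nat \<Rightarrow> nat \<Rightarrow> real" and c c' :: nat
  assumes family: "\<forall>\<xi>::real. complex_hadamard d (had_exp H \<xi> R)"
    and two_columns: "\<forall>j<d. \<forall>k<d. R j k \<noteq> 0 \<longrightarrow> k = c \<or> k = c'"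
    and c_less: "c < d"
begin

lemma truncated_column_orthogonal:
  assumes "k < d" "k \<noteq> c" "k \<noteq> c'"
  shows "(\<Sum>j\<in>{j\<in>{..<d}. R j c = 0}. H j c * cnj (H j k)) = 0"
proof -
  have "R j k = 0" if "j < d" for j using two_columns that assms by blast
  then have "(\<Sum>j<d. H j c * cnj (H j k) * exp (\<i> * complex_of_real (\<xi> * R j c)))
               = (\<Sum>j<d. had_exp H \<xi> R j c * cnj (had_exp H \<xi> R j k))" for \<xi>
    by (intro sum.cong) (simp_all add: had_exp_def)
  also have "\<dots> \<xi> = 0" for \<xi>
    using family assms c_less by (auto simp: complex_hadamard_def)
  finally have "\<forall>\<xi>::real. (\<Sum>j<d. H j c * cnj (H j k) * exp (\<i> * complex_of_real (\<xi> * R j c))) = 0"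
    by blast
  from exp_sum_eq_0_imp_frequency_sum_eq_0[OF finite_lessThan this, of 0] show ?thesis by simp
qed

lemma two_column_family_column_eq_0:
  assumes odd: "odd d" and hadamard: "complex_hadamard d H"
    and first_row: "R 0 c = 0" and c'_less: "c' < d" and j_less: "j < d"
  shows "R j c = 0"
proof (rule ccontr)
  assume "R j c \<noteq> 0"
  define S where "S = {j\<in>{..<d}. R j c = 0}"
  define u where "u j = (if R j c = 0 then H j c else 0)" for j
  define ip where "ip k = (\<Sum>l<d. u l * cnj (H l k))" for k
  define \<beta> where "\<beta> = (if c' = c then 0 else ip c')"
  have d0: "0 < d" using c_less by simp
  note unit = complex_hadamard_unimodular[OF hadamard]
  have ip_S: "ip k = (\<Sum>l\<in>S. H l c * cnj (H l k))" for k
    unfolding ip_def S_def u_def by (rule sum.mono_neutral_cong_right) auto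
  have ip_c: "ip c = of_nat (card S)"
    unfolding ip_S using unit c_less by (simp add: S_def unimodular_mult_cnj)
  have ip_other: "ip k = 0" if "k < d" "k \<noteq> c" "k \<noteq> c'" for k
    using truncated_column_orthogonal[OF that] by (simp add: ip_S S_def)
  have expand: "of_nat d * u i = of_nat (card S) * H i c + \<beta> * H i c'" if "i < d" for i
  proof -
    have "(\<Sum>k<d. H i k * ip k) = (\<Sum>k\<in>{c, c'}. H i k * ip k)"
      by (rule sum.mono_neutral_right) (auto simp: c_less c'_less ip_other)
    then show ?thesis
      using complex_hadamard_expansion[OF hadamard that, of u, folded ip_def] ip_c
      by (cases "c' = c") (simp_all add: \<beta>_def)
  qed
  have "of_nat (card S) * H j c = - (\<beta> * H j c')"
    using expand[OF j_less] \<open>R j c \<noteq> 0\<close> by (simp add: u_def add_eq_0_iff)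
  then have "norm (of_nat (card S) * H j c) = norm (\<beta> * H j c')"
    by (metis norm_minus_cancel)
  then have s_eq: "real (card S) = norm \<beta>"
    using unit[OF j_less c_less] unit[OF j_less c'_less] by (simp add: norm_mult)
  have card_le: "card S \<le> d"
    using card_mono[of "{..<d}" S] by (auto simp: S_def)
  have "of_nat (d - card S) * H 0 c = \<beta> * H 0 c'"
    using expand[OF d0] first_row card_le by (simp add: u_def of_nat_diff algebra_simps)
  then have "norm (of_nat (d - card S) * H 0 c) = norm (\<beta> * H 0 c')" by simp
  then have "real (d - card S) = norm \<beta>"
    using unit[OF d0 c_less] unit[OF d0 c'_less] by (simp add: norm_mult)
  with s_eq card_le have "d = 2 * card S" by linarith
  with odd show False by simp
qed

end

lemma two_column_family_eq_0:
  fixes H :: "nat \<Rightarrow> nat \<Rightarrow> complex" and R :: "nat \<Rightarrow> nat \<Rightarrow> real"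
  assumes odd: "odd d" and hadamard: "complex_hadamard d H"
    and family: "\<forall>\<xi>::real. complex_hadamard d (had_exp H \<xi> R)"
    and first_row: "\<forall>k<d. R 0 k = 0"
    and c1: "c1 < d" and c2: "c2 < d"
    and two_columns: "\<forall>j<d. \<forall>k<d. R j k \<noteq> 0 \<longrightarrow> k = c1 \<or> k = c2"
    and j: "j < d" and k: "k < d"
  shows "R j k = 0"
proof -
  have two_columns': "\<forall>j<d. \<forall>k<d. R j k \<noteq> 0 \<longrightarrow> k = c2 \<or> k = c1"
    using two_columns by auto
  have "R j c1 = 0"
    using two_column_family_column_eq_0[OF family two_columns c1 odd hadamard
        first_row[rule_format, OF c1] c2 j] .
  moreover have "R j c2 = 0"
    using two_column_family_column_eq_0[OF family two_columns' c2 odd hadamard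
        first_row[rule_format, OF c2] c1 j] .
  moreover have "R j k \<noteq> 0 \<longrightarrow> k = c1 \<or> k = c2" using two_columns j k by simp
  ultimately show ?thesis by auto
qed

theorem corollary2:
  fixes d :: nat and H :: "nat \<Rightarrow> nat \<Rightarrow> complex"
  assumes "odd d"
    and "complex_hadamard d H" and "dephased d H"
  shows "\<not> (\<exists>R :: nat \<Rightarrow> nat \<Rightarrow> real.
            (\<exists>j<d. \<exists>k<d. R j k \<noteq> 0) \<and>
            (\<forall>k<d. R 0 k = 0) \<and> (\<forall>j<d. R j 0 = 0) \<and>
            ((\<exists>c1<d. \<exists>c2<d. \<forall>j<d. \<forall>k<d. R j k \<noteq> 0 \<longrightarrow> k = c1 \<or> k = c2) \<or>
             (\<exists>r1<d. \<exists>r2<d. \<forall>j<d. \<forall>k<d. R j k \<noteq> 0 \<longrightarrow> j = r1 \<or> j = r2)) \<and>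
            (\<forall>\<xi>::real. complex_hadamard d (had_exp H \<xi> R)))"
proof (intro notI, elim exE conjE disjE)
  fix R :: "nat \<Rightarrow> nat \<Rightarrow> real" and j k c1 c2
  assume j: "j < d" and k: "k < d" and nonzero: "R j k \<noteq> 0"
    and first_row: "\<forall>k<d. R 0 k = 0" and first_col: "\<forall>j<d. R j 0 = 0"
    and family: "\<forall>\<xi>::real. complex_hadamard d (had_exp H \<xi> R)"
    and c1: "c1 < d" and c2: "c2 < d"
  {
    assume "\<forall>j<d. \<forall>k<d. R j k \<noteq> 0 \<longrightarrow> k = c1 \<or> k = c2"
    from two_column_family_eq_0[OF assms(1,2) family first_row c1 c2 this j k] nonzero
    show False by contradiction
  }
  {
    assume "\<forall>j<d. \<forall>k<d. R j k \<noteq> 0 \<longrightarrow> j = c1 \<or> j = c2"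
    then have two_columns: "\<forall>j<d. \<forall>k<d. R k j \<noteq> 0 \<longrightarrow> k = c1 \<or> k = c2" by auto
    have "\<forall>\<xi>::real. complex_hadamard d (had_exp (\<lambda>j k. H k j) \<xi> (\<lambda>j k. R k j))"
      \<comment> \<open>uninstantiated, had_exp_transpose loops: up to eta its left side matches any had_exp term\<close>
      using complex_hadamard_transpose[OF family[rule_format]] by (simp add: had_exp_transpose[of H _ R])
    from two_column_family_eq_0[OF assms(1) complex_hadamard_transpose[OF assms(2)] this first_col
        c1 c2 two_columns k j] nonzero
    show False by contradiction
  }
qed

end
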